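(* Let $d,N\in\mathbb N$ with $d\le N$ and let $\Pi$ be a set of two-coloured partitions containing the four mixed-coloured pair partitions. Let $x=(x_{ij})_{i\in[N],j\in[d]}$ be the generators of $C(X_{N,d}(\Pi))$ and $u=(u_{ij})$ the fundamental matrix of $G_N(\Pi)$. Then $x_{ij}\mapsto u_{ij}$ ($1\le i\le N$, $1\le j\le d$) defines a unital $*$-homomorphism $C(X_{N,d}(\Pi))\to C(G_N(\Pi))$.
   Context: $[n]:=\{1,\dots,n\}$; $[N]^0=\{\epsilon\}$. A two-coloured partition on $k$ upper and $l$ lower points is a partition of the $k$ upper and $l$ lower points (each row ordered left to right) into non-empty disjoint blocks, each point coloured $1$ or $*$; $\mathcal P(\omega,\omega')$ denotes those with upper colour word $\omega\in\{1,*\}^k$ and lower colour word $\omega'\in\{1,*\}^l$. Through-blocks contain upper and lower points; $tb(p)$ is their number. A row labeling is valid if points of that row in a common block carry equal labels; $\epsilon$ is valid. Decomposition of labelings of $p$: $T_0$/$T'_0$ = invalid upper/lower row labelings; $r=N^{tb(p)}$; enumerate assignments of labels in $[N]$ to the through-blocks as $1,\dots,r$; $T_i$/$T'_i$ = valid upper/lower row labelings giving each through-block the label of the $i$-th assignment. $a^1:=a$; empty products equal $\mathbb 1$. Mixed-coloured pair partitions: the four partitions consisting of one block of two oppositely coloured points, both in the upper row or both in the lower row. $R^{Gr}_p(u)$ for an $N\times N$ matrix $u$: (i) $\sum_{t\in T_i}u_{t_1\gamma_1}^{\omega_1}\cdots u_{t_k\gamma_k}^{\omega_k}=\sum_{t'\in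 T'_j}u_{\gamma'_1t'_1}^{\omega'_1}\cdots u_{\gamma'_lt'_l}^{\omega'_l}$ for $1\le i,j\le r$, $\gamma\in T_j$, $\gamma'\in T'_i$; (ii) $\sum_{t\in T_i}u_{t_1\gamma_1}^{\omega_1}\cdots u_{t_k\gamma_k}^{\omega_k}=0$ for $\gamma\in T_0$; (iii) $\sum_{t'\in T'_j}u_{\gamma'_1t'_1}^{\omega'_1}\cdots u_{\gamma'_lt'_l}^{\omega'_l}=0$ for $\gamma'\in T'_0$. $C(G_N(\Pi))$ = universal unital $C^*$-algebra generated by $u_{ij}$ ($1\le i,j\le N$) subject to $R^{Gr}_p(u)$ for all $p\in\Pi$. $R^{Sp}_p(x)$ for $x=(x_{ij})_{i\in[N],j\in[d]}$: (i) $\sum_{t\in T_i}x_{t_1\gamma_1}^{\omega_1}\cdots x_{t_k\gamma_k}^{\omega_k}=\sum_{t'\in T'_i}x_{t'_1\gamma'_1}^{\omega'_1}\cdots x_{t'_l\gamma'_l}^{\omega'_l}$ for $1\le i,j\le r$, $\gamma\in T_j\cap[d]^k$, $\gamma'\in T'_j\cap[d]^l$; (ii) $\sum_{t\in T_i}x_{t_1\gamma_1}^{\omega_1}\cdots x_{t_k\gamma_k}^{\omega_k}=0$ for $\gamma\in T_0\cap[d]^k$; (iii) $\sum_{t'\in T'_i}x_{t'_1\gamma'_1}^{\omega'_1}\cdots x_{t'_l\gamma'_l}^{\omega'_l}=0$ for $\gamma'\in T'_0\cap[d]^l$. $C(X_{N,d}(\Pi))$ = universal unital $C^*$-algebra generated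 by $x_{ij}$ subject to $R^{Sp}_p(x)$ for all $p\in\Pi$ (partition quantum space of $d$ vectors). *)

theory Defs
  imports Complex_Main
begin

class cstar_algebra = real_normed_algebra_1 + banach +
  fixes invol :: "'a \<Rightarrow> 'a"
    and cscale :: "complex \<Rightarrow> 'a \<Rightarrow> 'a"
  assumes invol_invol: "invol (invol a) = a"
    and invol_add: "invol (a + b) = invol a + invol b"
    and invol_mult: "invol (a * b) = invol b * invol a"
    and invol_cscale: "invol (cscale c a) = cscale (cnj c) (invol a)"
    and cscale_add_left: "cscale (c + e) a = cscale c a + cscale e a"
    and cscale_add_right: "cscale c (a + b) = cscale c a + cscale c b"
    and cscale_mult: "cscale (c * e) a = cscale c (cscale e a)"
    and cscale_of_real: "cscale (complex_of_real r) a = scaleR r a"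
    and cscale_mult_left: "cscale c (a * b) = cscale c a * b"
    and cscale_mult_right: "cscale c (a * b) = a * cscale c b"
    and norm_cscale: "norm (cscale c a) = cmod c * norm a"
    and cstar_identity: "norm (invol a * a) = (norm a)^2"

datatype colour = White | Black  \<comment> \<open>White = colour 1, Black = colour *\<close>

datatype point = Up nat | Lo nat  \<comment> \<open>upper / lower points, 0-indexed left to right\<close>

text \<open>A two-coloured partition: upper colour word, lower colour word, and the block
  structure as an equivalence relation on the points (blocks = equivalence classes).\<close>
datatype partition = Part "colour list" "colour list" "(point \<times> point) set"

fun ucols :: "partition \<Rightarrow> colour list" where "ucols (Part w w' R) = w"
fun lcols :: "partition \<Rightarrow> colour list" where "lcols (Part w w' R) = w'"
fun blocks_rel :: "partition \<Rightarrow> (point \<times> point) set" where "blocks_rel (Part w w' R) = R"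

definition points :: "partition \<Rightarrow> point set" where
  "points p = Up ` {..<length (ucols p)} \<union> Lo ` {..<length (lcols p)}"

definition is_partition :: "partition \<Rightarrow> bool" where
  "is_partition p \<longleftrightarrow> equiv (points p) (blocks_rel p)"

definition blocks :: "partition \<Rightarrow> point set set" where
  "blocks p = points p // blocks_rel p"

definition through_blocks :: "partition \<Rightarrow> point set set" where
  "through_blocks p = {B \<in> blocks p. (\<exists>a. Up a \<in> B) \<and> (\<exists>b. Lo b \<in> B)}"

definition tb :: "partition \<Rightarrow> nat" where
  "tb p = card (through_blocks p)"

definition pair_rel :: "(nat \<Rightarrow> point) \<Rightarrow> (point \<times> point) set" where
  "pair_rel P = {P 0, P 1} \<times> {P 0, P 1}"

definition mixed_pairs :: "partition set" where
  "mixed_pairs = {Part [White, Black] [] (pair_rel Up), Part [Black, White] [] (pair_rel Up),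
                  Part [] [White, Black] (pair_rel Lo), Part [] [Black, White] (pair_rel Lo)}"

definition valid_up :: "partition \<Rightarrow> nat list \<Rightarrow> bool" where
  "valid_up p t \<longleftrightarrow> (\<forall>a<length (ucols p). \<forall>b<length (ucols p).
      (Up a, Up b) \<in> blocks_rel p \<longrightarrow> t ! a = t ! b)"

definition valid_lo :: "partition \<Rightarrow> nat list \<Rightarrow> bool" where
  "valid_lo p t \<longleftrightarrow> (\<forall>a<length (lcols p). \<forall>b<length (lcols p).
      (Lo a, Lo b) \<in> blocks_rel p \<longrightarrow> t ! a = t ! b)"

definition labelings :: "nat \<Rightarrow> nat \<Rightarrow> nat list set" where
  "labelings N k = {t. length t = k \<and> set t \<subseteq> {1..N}}"

text \<open>Assignments of labels in [N] to the through-blocks (indexing the sets T_i).\<close>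
definition assignments :: "nat \<Rightarrow> partition \<Rightarrow> (point set \<Rightarrow> nat) set" where
  "assignments N p = {f. \<forall>B \<in> through_blocks p. f B \<in> {1..N}}"

definition T0 :: "nat \<Rightarrow> partition \<Rightarrow> nat list set" where
  "T0 N p = {t \<in> labelings N (length (ucols p)). \<not> valid_up p t}"

definition T0' :: "nat \<Rightarrow> partition \<Rightarrow> nat list set" where
  "T0' N p = {t \<in> labelings N (length (lcols p)). \<not> valid_lo p t}"

definition T :: "nat \<Rightarrow> partition \<Rightarrow> (point set \<Rightarrow> nat) \<Rightarrow> nat list set" where
  "T N p f = {t \<in> labelings N (length (ucols p)). valid_up p t \<and>
      (\<forall>B \<in> through_blocks p. \<forall>a<length (ucols p). Up a \<in> B \<longrightarrow> t ! a = f B)}"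

definition T' :: "nat \<Rightarrow> partition \<Rightarrow> (point set \<Rightarrow> nat) \<Rightarrow> nat list set" where
  "T' N p f = {t \<in> labelings N (length (lcols p)). valid_lo p t \<and>
      (\<forall>B \<in> through_blocks p. \<forall>a<length (lcols p). Lo a \<in> B \<longrightarrow> t ! a = f B)}"

definition cpow :: "colour \<Rightarrow> 'a::cstar_algebra \<Rightarrow> 'a" where
  "cpow c a = (case c of White \<Rightarrow> a | Black \<Rightarrow> invol a)"

definition mono :: "(nat \<Rightarrow> nat \<Rightarrow> 'a::cstar_algebra) \<Rightarrow> colour list \<Rightarrow> nat list \<Rightarrow> nat list \<Rightarrow> 'a" where
  "mono a w is js = prod_list (map (\<lambda>n. cpow (w ! n) (a (is ! n) (js ! n))) [0..<length w])"

definition R_Gr :: "nat \<Rightarrow> partition \<Rightarrow> (nat \<Rightarrow> nat \<Rightarrow> 'a::cstar_algebra) \<Rightarrow> bool" where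
  "R_Gr N p u \<longleftrightarrow>
     (\<forall>f \<in> assignments N p. \<forall>g \<in> assignments N p. \<forall>\<gamma> \<in> T N p g. \<forall>\<gamma>' \<in> T' N p f.
        (\<Sum>t \<in> T N p f. mono u (ucols p) t \<gamma>) = (\<Sum>t' \<in> T' N p g. mono u (lcols p) \<gamma>' t'))
   \<and> (\<forall>f \<in> assignments N p. \<forall>\<gamma> \<in> T0 N p. (\<Sum>t \<in> T N p f. mono u (ucols p) t \<gamma>) = 0)
   \<and> (\<forall>g \<in> assignments N p. \<forall>\<gamma>' \<in> T0' N p. (\<Sum>t' \<in> T' N p g. mono u (lcols p) \<gamma>' t') = 0)"

definition R_Sp :: "nat \<Rightarrow> nat \<Rightarrow> partition \<Rightarrow> (nat \<Rightarrow> nat \<Rightarrow> 'a::cstar_algebra) \<Rightarrow> bool" where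
  "R_Sp N d p x \<longleftrightarrow>
     (\<forall>f \<in> assignments N p. \<forall>g \<in> assignments N p.
        \<forall>\<gamma> \<in> T N p g \<inter> labelings d (length (ucols p)).
        \<forall>\<gamma>' \<in> T' N p g \<inter> labelings d (length (lcols p)).
        (\<Sum>t \<in> T N p f. mono x (ucols p) t \<gamma>) = (\<Sum>t' \<in> T' N p f. mono x (lcols p) t' \<gamma>'))
   \<and> (\<forall>f \<in> assignments N p. \<forall>\<gamma> \<in> T0 N p \<inter> labelings d (length (ucols p)).
        (\<Sum>t \<in> T N p f. mono x (ucols p) t \<gamma>) = 0)
   \<and> (\<forall>f \<in> assignments N p. \<forall>\<gamma>' \<in> T0' N p \<inter> labelings d (length (lcols p)).
        (\<Sum>t' \<in> T' N p f. mono x (lcols p) t' \<gamma>') = 0)"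

end

theory Submission
  imports Defs
begin

text \<open>For p \<in> \<Pi> the relations R_Gr say that the 0/1-matrix \<delta>_p of compatible upper and lower
  labelings intertwines the tensor powers of u. The mixed-coloured pair partitions make u and its
  entrywise adjoint unitary, hence also every tensor power (whose entries are the monomials
  mono u w), and then the intertwining relation can be transposed. The first relation turns the sum
  over T_f in R_Sp into a quantity Z that does not depend on the labeling \<gamma> \<in> T_g; the transposed
  one turns the sum over T'_f into a sum over T_g with an arbitrary \<sigma> \<in> T_f as first index.
  Summing over \<sigma> \<in> T_f gives |T_f| times the sum over T'_f on one side and, after exchanging
  the sums, |T_g| Z on the other; finally |T_f| = |T_g| since relabelling the through-blocks is a
  bijection between the two sets.\<close>

lemma invol_zero [simp]: "invol (0::'a::cstar_algebra) = 0"
  using invol_add[of "0::'a" 0] by simp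

lemma invol_one [simp]: "invol (1::'a::cstar_algebra) = 1"
proof -
  have "invol (1::'a) = invol 1 * invol (invol 1)" by (simp add: invol_invol)
  also have "\<dots> = invol (invol 1 * 1)" by (simp only: invol_mult)
  finally show ?thesis by (simp add: invol_invol)
qed

lemma invol_sum: "invol (sum f A) = (\<Sum>x\<in>A. invol (f x :: 'a::cstar_algebra))"
  by (induct A rule: infinite_finite_induct) (auto simp: invol_add)

lemma of_nat_mult_cancel_left:
  assumes "c > 0" "(of_nat c :: 'a::real_normed_algebra_1) * x = of_nat c * y"
  shows "x = y"
proof -
  have "(of_nat c :: 'a) * z = real c *\<^sub>R z" for z
    by (simp add: scaleR_conv_of_real)
  then show ?thesis using assms by simp
qed

text \<open>Insert the row orthonormality of U, apply the adjoint of the hypothesis, and contract with the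
  column orthonormality of V.\<close>
lemma intertwiner_adjoint:
  fixes U :: "'k \<Rightarrow> 'k \<Rightarrow> 'a::cstar_algebra" and V :: "'l \<Rightarrow> 'l \<Rightarrow> 'a" and R :: "'k \<Rightarrow> 'l \<Rightarrow> bool"
  assumes "finite K" "finite L"
    and intertwines: "\<And>s s'. s \<in> K \<Longrightarrow> s' \<in> L \<Longrightarrow>
      (\<Sum>t\<in>K. if R t s' then U t s else 0) = (\<Sum>t'\<in>L. if R s t' then V s' t' else 0)"
    and U_rows: "\<And>r s. r \<in> K \<Longrightarrow> s \<in> K \<Longrightarrow> (\<Sum>q\<in>K. invol (U r q) * U s q) = (if r = s then 1 else 0)"
    and V_columns: "\<And>r s. r \<in> L \<Longrightarrow> s \<in> L \<Longrightarrow> (\<Sum>q\<in>L. V q r * invol (V q s)) = (if r = s then 1 else 0)"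
    and "s \<in> K" "s' \<in> L"
  shows "(\<Sum>t'\<in>L. if R s t' then V t' s' else 0) = (\<Sum>t\<in>K. if R t s' then U s t else 0)"
proof -
  have intertwines_invol: "(\<Sum>r\<in>K. if R r t' then invol (U r q) else 0)
      = (\<Sum>r'\<in>L. if R q r' then invol (V t' r') else 0)" if "q \<in> K" "t' \<in> L" for q t'
    using arg_cong[OF intertwines[OF that], of invol] by (simp add: invol_sum if_distrib[of invol] cong: if_cong)
  have U_delta: "(\<Sum>r\<in>K. if R r t' then \<Sum>q\<in>K. invol (U r q) * U s q else 0) = (if R s t' then 1 else 0)"
    for t'
  proof -
    have "(\<Sum>r\<in>K. if R r t' then \<Sum>q\<in>K. invol (U r q) * U s q else 0)
        = (\<Sum>r\<in>K. if r = s then (if R s t' then 1 else 0) else 0)"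
      by (rule sum.cong) (auto simp: U_rows \<open>s \<in> K\<close>)
    then show ?thesis using assms(1) \<open>s \<in> K\<close> by simp
  qed
  have V_delta: "(\<Sum>r'\<in>L. if R q r' then \<Sum>t'\<in>L. V t' s' * invol (V t' r') else 0) = (if R q s' then 1 else 0)"
    for q
  proof -
    have "(\<Sum>r'\<in>L. if R q r' then \<Sum>t'\<in>L. V t' s' * invol (V t' r') else 0)
        = (\<Sum>r'\<in>L. if s' = r' then (if R q s' then 1 else 0) else 0)"
      by (rule sum.cong) (auto simp: V_columns \<open>s' \<in> L\<close>)
    then show ?thesis using assms(2) \<open>s' \<in> L\<close> by simp
  qed
  have "(\<Sum>t'\<in>L. if R s t' then V t' s' else 0)
      = (\<Sum>t'\<in>L. V t' s' * (\<Sum>r\<in>K. if R r t' then \<Sum>q\<in>K. invol (U r q) * U s q else 0))"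
    by (rule sum.cong) (simp_all add: U_delta)
  also have "\<dots> = (\<Sum>t'\<in>L. \<Sum>r\<in>K. \<Sum>q\<in>K. V t' s' * (if R r t' then invol (U r q) else 0) * U s q)"
    by (auto simp: sum_distrib_left mult.assoc intro!: sum.cong)
  also have "\<dots> = (\<Sum>t'\<in>L. \<Sum>q\<in>K. V t' s' * (\<Sum>r\<in>K. if R r t' then invol (U r q) else 0) * U s q)"
    by (rule sum.cong[OF refl], subst sum.swap) (simp add: sum_distrib_left sum_distrib_right)
  also have "\<dots> = (\<Sum>t'\<in>L. \<Sum>q\<in>K. V t' s' * (\<Sum>r'\<in>L. if R q r' then invol (V t' r') else 0) * U s q)"
    by (simp add: intertwines_invol)
  also have "\<dots> = (\<Sum>q\<in>K. \<Sum>t'\<in>L. \<Sum>r'\<in>L. (if R q r' then V t' s' * invol (V t' r') else 0) * U s q)"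
    by (subst sum.swap, intro sum.cong refl) (auto simp: sum_distrib_left sum_distrib_right mult.assoc intro!: sum.cong)
  also have "\<dots> = (\<Sum>q\<in>K. (\<Sum>r'\<in>L. if R q r' then \<Sum>t'\<in>L. V t' s' * invol (V t' r') else 0) * U s q)"
    by (rule sum.cong[OF refl], subst sum.swap) (auto simp: sum_distrib_right intro!: sum.cong)
  also have "\<dots> = (\<Sum>t\<in>K. if R t s' then U s t else 0)"
    by (rule sum.cong) (simp_all add: V_delta)
  finally show ?thesis .
qed

lemma labelings_0: "labelings N 0 = {[]}"
  by (auto simp: labelings_def)

lemma labelings_Suc: "labelings N (Suc k) = (\<lambda>(a, t). a # t) ` ({1..N} \<times> labelings N k)"
  by (auto simp: labelings_def length_Suc_conv image_iff)

lemma finite_labelings [simp]: "finite (labelings N k)"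
  by (induct k) (auto simp: labelings_0 labelings_Suc)

lemma labelings_SucE:
  assumes "r \<in> labelings N (Suc k)"
  obtains b r' where "r = b # r'" "b \<in> {1..N}" "r' \<in> labelings N k"
  using assms by (auto simp: labelings_Suc)

lemma sum_labelings_Suc:
  "(\<Sum>q\<in>labelings N (Suc k). F q) = (\<Sum>a\<in>{1..N}. \<Sum>q\<in>labelings N k. F (a # q))"
proof -
  have "inj_on (\<lambda>(a, t). a # t) ({1..N} \<times> labelings N k)" by (auto simp: inj_on_def)
  then have "(\<Sum>q\<in>labelings N (Suc k). F q) = (\<Sum>x\<in>{1..N} \<times> labelings N k. F (case x of (a, t) \<Rightarrow> a # t))"
    unfolding labelings_Suc by (simp add: sum.reindex)
  also have "\<dots> = (\<Sum>a\<in>{1..N}. \<Sum>q\<in>labelings N k. F (a # q))"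
    by (simp add: sum.cartesian_product split_def)
  finally show ?thesis .
qed

lemma mono_Nil [simp]: "mono u [] is js = 1"
  by (simp add: mono_def)

lemma mono_Cons [simp]: "mono u (c # w) (i # is) (j # js) = cpow c (u i j) * mono u w is js"
  by (simp add: mono_def upt_conv_Cons map_Suc_upt[symmetric] o_def del: upt_Suc)

section \<open>Unitarity of the tensor powers\<close>

text \<open>For c = Black the two sums express u u^* = 1 and u^* u = 1, for c = White they express
  the same for the entrywise adjoint of u.\<close>
definition biunitary :: "nat \<Rightarrow> (nat \<Rightarrow> nat \<Rightarrow> 'a::cstar_algebra) \<Rightarrow> bool" where
  "biunitary N u \<longleftrightarrow> (\<forall>c. \<forall>b\<in>{1..N}. \<forall>e\<in>{1..N}.
     (\<Sum>a\<in>{1..N}. invol (cpow c (u b a)) * cpow c (u e a)) = (if b = e then 1 else 0) \<and>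
     (\<Sum>a\<in>{1..N}. cpow c (u a b) * invol (cpow c (u a e))) = (if b = e then 1 else 0))"

lemma biunitary_mono_rows:
  assumes "biunitary N u" "r \<in> labelings N (length w)" "s \<in> labelings N (length w)"
  shows "(\<Sum>q\<in>labelings N (length w). invol (mono u w r q) * mono u w s q) = (if r = s then 1 else 0)"
  using assms(2,3)
proof (induction w arbitrary: r s)
  case Nil
  then show ?case by (simp add: labelings_0)
next
  case (Cons c w)
  from Cons.prems(1) obtain b r' where r: "r = b # r'" "b \<in> {1..N}" "r' \<in> labelings N (length w)"
    by (auto elim: labelings_SucE)
  from Cons.prems(2) obtain e s' where s: "s = e # s'" "e \<in> {1..N}" "s' \<in> labelings N (length w)"
    by (auto elim: labelings_SucE)
  let ?M = "mono u w"
  have "(\<Sum>q\<in>labelings N (length (c # w)). invol (mono u (c # w) r q) * mono u (c # w) s q)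
      = (\<Sum>a\<in>{1..N}. \<Sum>q\<in>labelings N (length w).
           invol (?M r' q) * (invol (cpow c (u b a)) * cpow c (u e a)) * ?M s' q)"
    by (simp add: sum_labelings_Suc r s invol_mult mult.assoc)
  also have "\<dots> = (\<Sum>q\<in>labelings N (length w).
      invol (?M r' q) * (\<Sum>a\<in>{1..N}. invol (cpow c (u b a)) * cpow c (u e a)) * ?M s' q)"
    by (subst sum.swap) (simp add: sum_distrib_left sum_distrib_right)
  also have "\<dots> = (if b = e then 1 else 0) * (\<Sum>q\<in>labelings N (length w). invol (?M r' q) * ?M s' q)"
    using assms(1) r(2) s(2) by (simp add: biunitary_def sum_distrib_left)
  also have "\<dots> = (if r = s then 1 else 0)"
    using Cons.IH[OF r(3) s(3)] by (simp add: r s)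
  finally show ?case .
qed

lemma biunitary_mono_columns:
  assumes "biunitary N u" "r \<in> labelings N (length w)" "s \<in> labelings N (length w)"
  shows "(\<Sum>q\<in>labelings N (length w). mono u w q r * invol (mono u w q s)) = (if r = s then 1 else 0)"
  using assms(2,3)
proof (induction w arbitrary: r s)
  case Nil
  then show ?case by (simp add: labelings_0)
next
  case (Cons c w)
  from Cons.prems(1) obtain b r' where r: "r = b # r'" "b \<in> {1..N}" "r' \<in> labelings N (length w)"
    by (auto elim: labelings_SucE)
  from Cons.prems(2) obtain e s' where s: "s = e # s'" "e \<in> {1..N}" "s' \<in> labelings N (length w)"
    by (auto elim: labelings_SucE)
  let ?M = "mono u w"
  have "(\<Sum>q\<in>labelings N (length (c # w)). mono u (c # w) q r * invol (mono u (c # w) q s))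
      = (\<Sum>a\<in>{1..N}. cpow c (u a b) * (\<Sum>q\<in>labelings N (length w). ?M q r' * invol (?M q s'))
           * invol (cpow c (u a e)))"
    by (simp add: sum_labelings_Suc r s invol_mult mult.assoc sum_distrib_left sum_distrib_right)
  also have "\<dots> = (if r' = s' then 1 else 0) * (\<Sum>a\<in>{1..N}. cpow c (u a b) * invol (cpow c (u a e)))"
    using Cons.IH[OF r(3) s(3)] by (simp add: sum_distrib_left)
  also have "\<dots> = (if r = s then 1 else 0)"
    using assms(1) r(2) s(2) by (simp add: biunitary_def r s)
  finally show ?case .
qed

lemma through_blocks_pair:
  "P = Up \<or> P = Lo \<Longrightarrow> w = [] \<or> w' = [] \<Longrightarrow> through_blocks (Part w w' (pair_rel P)) = {}"
  by (auto simp: through_blocks_def blocks_def quotient_def points_def pair_rel_def)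

lemma sum_diagonal: "(\<Sum>t\<in>(\<lambda>a. [a, a]) ` {1..N}. F t) = (\<Sum>a\<in>{1..N}. F [a, a])"
  by (subst sum.reindex) (auto simp: inj_on_def)

lemma R_Gr_upper_pair:
  assumes "R_Gr N (Part [c1, c2] [] (pair_rel Up)) u" "b \<in> {1..N}" "e \<in> {1..N}"
  shows "(\<Sum>a\<in>{1..N}. cpow c1 (u a b) * cpow c2 (u a e)) = (if b = e then 1 else 0)"
proof -
  let ?p = "Part [c1, c2] [] (pair_rel Up)"
  have valid: "valid_up ?p t \<longleftrightarrow> t ! 0 = t ! 1" for t
    by (auto simp: valid_up_def pair_rel_def less_2_cases_iff)
  have T: "T N ?p f = (\<lambda>a. [a, a]) ` {1..N}" for f
    by (auto simp: T_def through_blocks_pair valid labelings_def length_Suc_conv)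
  have T': "T' N ?p f = {[]}" for f
    by (auto simp: T'_def valid_lo_def labelings_def)
  have assignments: "assignments N ?p = UNIV"
    by (simp add: assignments_def through_blocks_pair)
  have sum_T: "(\<Sum>t\<in>T N ?p f. mono u [c1, c2] t [b, e]) = (\<Sum>a\<in>{1..N}. cpow c1 (u a b) * cpow c2 (u a e))"
    for f
    unfolding T sum_diagonal by simp
  show ?thesis
  proof (cases "b = e")
    case True
    then have "[b, e] \<in> T N ?p undefined" using assms T by auto
    then have "(\<Sum>t\<in>T N ?p undefined. mono u [c1, c2] t [b, e]) = 1"
      using assms(1) by (auto simp: R_Gr_def assignments T')
    then show ?thesis unfolding sum_T using True by simp
  next
    case False
    then have "[b, e] \<in> T0 N ?p" using assms by (auto simp: T0_def valid labelings_def)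
    then have "(\<Sum>t\<in>T N ?p undefined. mono u [c1, c2] t [b, e]) = 0"
      using assms(1) by (auto simp: R_Gr_def assignments)
    then show ?thesis unfolding sum_T using False by simp
  qed
qed

lemma R_Gr_lower_pair:
  assumes "R_Gr N (Part [] [c1, c2] (pair_rel Lo)) u" "b \<in> {1..N}" "e \<in> {1..N}"
  shows "(\<Sum>a\<in>{1..N}. cpow c1 (u b a) * cpow c2 (u e a)) = (if b = e then 1 else 0)"
proof -
  let ?p = "Part [] [c1, c2] (pair_rel Lo)"
  have valid: "valid_lo ?p t \<longleftrightarrow> t ! 0 = t ! 1" for t
    by (auto simp: valid_lo_def pair_rel_def less_2_cases_iff)
  have T': "T' N ?p f = (\<lambda>a. [a, a]) ` {1..N}" for f
    by (auto simp: T'_def through_blocks_pair valid labelings_def length_Suc_conv)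
  have T: "T N ?p f = {[]}" for f
    by (auto simp: T_def valid_up_def labelings_def)
  have assignments: "assignments N ?p = UNIV"
    by (simp add: assignments_def through_blocks_pair)
  have sum_T': "(\<Sum>t\<in>T' N ?p f. mono u [c1, c2] [b, e] t) = (\<Sum>a\<in>{1..N}. cpow c1 (u b a) * cpow c2 (u e a))"
    for f
    unfolding T' sum_diagonal by simp
  show ?thesis
  proof (cases "b = e")
    case True
    then have "[b, e] \<in> T' N ?p undefined" using assms T' by auto
    then have "(\<Sum>t\<in>T' N ?p undefined. mono u [c1, c2] [b, e] t) = 1"
      using assms(1) by (auto simp: R_Gr_def assignments T)
    then show ?thesis unfolding sum_T' using True by simp
  next
    case False
    then have "[b, e] \<in> T0' N ?p" using assms by (auto simp: T0'_def valid labelings_def)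
    then have "(\<Sum>t\<in>T' N ?p undefined. mono u [c1, c2] [b, e] t) = 0"
      using assms(1) by (auto simp: R_Gr_def assignments)
    then show ?thesis unfolding sum_T' using False by simp
  qed
qed

lemma mixed_pairs_biunitary:
  assumes "\<forall>q\<in>mixed_pairs. R_Gr N q u"
  shows "biunitary N u"
  unfolding biunitary_def
proof (intro allI ballI conjI)
  fix c b e assume be: "b \<in> {1..N}" "e \<in> {1..N}"
  have upper: "R_Gr N (Part [c, c'] [] (pair_rel Up)) u"
    and lower: "R_Gr N (Part [] [c', c] (pair_rel Lo)) u"
    if "c \<noteq> c'" for c c'
    using assms that by (cases c; cases c'; auto simp: mixed_pairs_def)+
  show "(\<Sum>a\<in>{1..N}. invol (cpow c (u b a)) * cpow c (u e a)) = (if b = e then 1 else 0)"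
    using R_Gr_lower_pair[OF lower be, of White Black] R_Gr_lower_pair[OF lower be, of Black White]
    by (cases c) (auto simp: cpow_def invol_invol)
  show "(\<Sum>a\<in>{1..N}. cpow c (u a b) * invol (cpow c (u a e))) = (if b = e then 1 else 0)"
    using R_Gr_upper_pair[OF upper be, of White Black] R_Gr_upper_pair[OF upper be, of Black White]
    by (cases c) (auto simp: cpow_def invol_invol)
qed

section \<open>Through-blocks and relabelling\<close>

lemma through_block_in_quotient: "B \<in> through_blocks p \<Longrightarrow> B \<in> points p // blocks_rel p"
  by (simp add: through_blocks_def blocks_def)

lemma through_block_rel:
  assumes "is_partition p" "B \<in> through_blocks p" "x \<in> B" "y \<in> B"
  shows "(x, y) \<in> blocks_rel p"
  using assms quotient_eq_iff[of "points p" "blocks_rel p" B B x y] through_block_in_quotient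
  by (simp add: is_partition_def)

lemma through_block_closed:
  assumes "is_partition p" "B \<in> through_blocks p" "x \<in> B" "(x, y) \<in> blocks_rel p"
  shows "y \<in> B"
proof -
  have equiv: "equiv (points p) (blocks_rel p)" using assms(1) by (simp add: is_partition_def)
  from through_block_in_quotient[OF assms(2)] obtain z where "B = blocks_rel p `` {z}"
    by (auto elim: quotientE)
  then show ?thesis using assms equiv by (auto elim!: equivE dest: transD)
qed

lemma through_block_subset_points:
  assumes "is_partition p" "B \<in> through_blocks p"
  shows "B \<subseteq> points p"
  using assms Union_quotient[of "points p" "blocks_rel p"] through_block_in_quotient
  by (auto simp: is_partition_def)

lemma through_block_disjoint:
  assumes "is_partition p" "B \<in> through_blocks p" "B' \<in> through_blocks p" "x \<in> B" "x \<in> B'"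
  shows "B = B'"
  using assms quotient_disj[of "points p" "blocks_rel p" B B'] through_block_in_quotient
  by (auto simp: is_partition_def)

lemma some_through_block:
  assumes "is_partition p" "B \<in> through_blocks p" "x \<in> B"
  shows "(SOME B'. B' \<in> through_blocks p \<and> x \<in> B') = B"
  using someI[of "\<lambda>B'. B' \<in> through_blocks p \<and> x \<in> B'" B] through_block_disjoint[OF assms(1,2)] assms(2,3)
  by blast

lemma through_block_has_Up:
  "is_partition p \<Longrightarrow> B \<in> through_blocks p \<Longrightarrow> \<exists>a<length (ucols p). Up a \<in> B"
  using through_block_subset_points[of p B] by (auto simp: through_blocks_def points_def)

lemma through_block_has_Lo:
  "is_partition p \<Longrightarrow> B \<in> through_blocks p \<Longrightarrow> \<exists>b<length (lcols p). Lo b \<in> B"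
  using through_block_subset_points[of p B] by (auto simp: through_blocks_def points_def)

text \<open>Upper and lower rows are treated at once: P is Up or Lo and n is the length of that row.\<close>
definition valid_row :: "partition \<Rightarrow> (nat \<Rightarrow> point) \<Rightarrow> nat \<Rightarrow> nat list \<Rightarrow> bool" where
  "valid_row p P n t \<longleftrightarrow> (\<forall>a<n. \<forall>b<n. (P a, P b) \<in> blocks_rel p \<longrightarrow> t ! a = t ! b)"

definition T_row :: "nat \<Rightarrow> partition \<Rightarrow> (nat \<Rightarrow> point) \<Rightarrow> nat \<Rightarrow> (point set \<Rightarrow> nat) \<Rightarrow> nat list set" where
  "T_row N p P n f = {t \<in> labelings N n. valid_row p P n t \<and>
      (\<forall>B \<in> through_blocks p. \<forall>a<n. P a \<in> B \<longrightarrow> t ! a = f B)}"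

lemma valid_up_eq_valid_row: "valid_up p t = valid_row p Up (length (ucols p)) t"
  by (simp add: valid_up_def valid_row_def)

lemma valid_lo_eq_valid_row: "valid_lo p t = valid_row p Lo (length (lcols p)) t"
  by (simp add: valid_lo_def valid_row_def)

lemma T_eq_T_row: "T N p f = T_row N p Up (length (ucols p)) f"
  by (simp add: T_def T_row_def valid_up_eq_valid_row)

lemma T'_eq_T_row: "T' N p f = T_row N p Lo (length (lcols p)) f"
  by (simp add: T'_def T_row_def valid_lo_eq_valid_row)

definition relabel :: "partition \<Rightarrow> (nat \<Rightarrow> point) \<Rightarrow> (point set \<Rightarrow> nat) \<Rightarrow> nat list \<Rightarrow> nat list" where
  "relabel p P f t = map (\<lambda>a. if \<exists>B\<in>through_blocks p. P a \<in> B
      then f (SOME B. B \<in> through_blocks p \<and> P a \<in> B) else t ! a) [0..<length t]"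

lemma length_relabel [simp]: "length (relabel p P f t) = length t"
  by (simp add: relabel_def)

lemma relabel_nth_through_block:
  assumes "is_partition p" "B \<in> through_blocks p" "P a \<in> B" "a < length t"
  shows "relabel p P f t ! a = f B"
  using assms some_through_block[OF assms(1-3)] by (auto simp: relabel_def)

lemma relabel_nth_other:
  assumes "\<forall>B\<in>through_blocks p. P a \<notin> B" "a < length t"
  shows "relabel p P f t ! a = t ! a"
  using assms by (auto simp: relabel_def)

lemma relabel_in_labelings:
  assumes "is_partition p" "f \<in> assignments N p" "t \<in> labelings N n"
  shows "relabel p P f t \<in> labelings N n"
proof -
  have "relabel p P f t ! a \<in> {1..N}" if "a < length t" for a
  proof (cases "\<exists>B\<in>through_blocks p. P a \<in> B")
    case True
    then obtain B where "B \<in> through_blocks p" "P a \<in> B" by blast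
    then show ?thesis
      using relabel_nth_through_block[OF assms(1) _ _ that] assms(2) by (auto simp: assignments_def)
  next
    case False
    have "t ! a \<in> {1..N}" using assms(3) that unfolding labelings_def by (blast intro: nth_mem)
    then show ?thesis using relabel_nth_other[OF _ that] False by simp
  qed
  then show ?thesis using assms(3) by (auto simp: labelings_def in_set_conv_nth)
qed

lemma valid_row_relabel:
  assumes "is_partition p" "length t = n" "valid_row p P n t"
  shows "valid_row p P n (relabel p P f t)"
  unfolding valid_row_def
proof (intro allI impI)
  fix a b assume ab: "a < n" "b < n" "(P a, P b) \<in> blocks_rel p"
  have ba: "(P b, P a) \<in> blocks_rel p"
    using ab(3) assms(1) by (auto simp: is_partition_def elim: equivE dest: symD)
  show "relabel p P f t ! a = relabel p P f t ! b"
  proof (cases "\<exists>B\<in>through_blocks p. P a \<in> B")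
    case True
    then obtain B where B: "B \<in> through_blocks p" "P a \<in> B" by blast
    then have "P b \<in> B" using through_block_closed[OF assms(1) B ab(3)] by blast
    then show ?thesis using relabel_nth_through_block[OF assms(1) B(1)] B ab assms(2) by simp
  next
    case False
    then have "\<forall>B\<in>through_blocks p. P b \<notin> B" using through_block_closed[OF assms(1) _ _ ba] by blast
    then show ?thesis
      using False relabel_nth_other assms(2,3) ab by (simp add: valid_row_def)
  qed
qed

lemma relabel_in_T_row:
  assumes "is_partition p" "f \<in> assignments N p" "t \<in> labelings N n" "valid_row p P n t"
  shows "relabel p P f t \<in> T_row N p P n f"
proof -
  have "length t = n" using assms(3) by (simp add: labelings_def)
  then show ?thesis
    using relabel_in_labelings[OF assms(1-3)] valid_row_relabel[OF assms(1) _ assms(4)]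
      relabel_nth_through_block[OF assms(1)]
    by (simp add: T_row_def)
qed

lemma relabel_T_row:
  assumes "is_partition p" "t \<in> T_row N p P n f"
  shows "relabel p P f t = t"
proof (rule nth_equalityI)
  fix a assume "a < length (relabel p P f t)"
  then have a: "a < length t" by simp
  show "relabel p P f t ! a = t ! a"
  proof (cases "\<exists>B\<in>through_blocks p. P a \<in> B")
    case True
    then obtain B where "B \<in> through_blocks p" "P a \<in> B" by blast
    then show ?thesis
      using relabel_nth_through_block[OF assms(1) _ _ a] assms(2) a
      by (auto simp: T_row_def labelings_def)
  qed (use relabel_nth_other[OF _ a] in auto)
qed simp

lemma T_row_imp_valid: "t \<in> T_row N p P n f \<Longrightarrow> t \<in> labelings N n \<and> valid_row p P n t"
  by (simp add: T_row_def)

lemma relabel_relabel: "relabel p P g (relabel p P f t) = relabel p P g t"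
  by (rule nth_equalityI) (auto simp: relabel_def)

lemma bij_betw_relabel_T_row:
  assumes "is_partition p" "f \<in> assignments N p" "g \<in> assignments N p"
  shows "bij_betw (relabel p P f) (T_row N p P n g) (T_row N p P n f)"
proof (rule bij_betw_byWitness[where f' = "relabel p P g"])
  show "\<forall>t\<in>T_row N p P n g. relabel p P g (relabel p P f t) = t"
    and "\<forall>t\<in>T_row N p P n f. relabel p P f (relabel p P g t) = t"
    using relabel_relabel relabel_T_row[OF assms(1)] by metis+
  show "relabel p P f ` T_row N p P n g \<subseteq> T_row N p P n f"
    and "relabel p P g ` T_row N p P n f \<subseteq> T_row N p P n g"
    using relabel_in_T_row[OF assms(1,2)] relabel_in_T_row[OF assms(1,3)] T_row_imp_valid by blast+
qed

lemma card_T_row_eq: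
  assumes "is_partition p" "f \<in> assignments N p" "g \<in> assignments N p"
  shows "card (T_row N p P n f) = card (T_row N p P n g)"
  using bij_betw_same_card[OF bij_betw_relabel_T_row[OF assms]] by simp

lemma card_T_eq:
  assumes "is_partition p" "f \<in> assignments N p" "g \<in> assignments N p"
  shows "card (T N p f) = card (T N p g)" and "card (T' N p f) = card (T' N p g)"
  using card_T_row_eq[OF assms] by (simp_all add: T_eq_T_row T'_eq_T_row)

lemma valid_row_in_T_row:
  assumes "is_partition p" "\<forall>a. P a \<in> points p \<longrightarrow> a < n" "\<forall>B\<in>through_blocks p. \<exists>a. P a \<in> B"
    and "t \<in> labelings N n" "valid_row p P n t"
  obtains g where "g \<in> assignments N p" "t \<in> T_row N p P n g"
proof -
  define rep where "rep B = (SOME a. a < n \<and> P a \<in> B)" for B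
  have rep: "rep B < n \<and> P (rep B) \<in> B" if B: "B \<in> through_blocks p" for B
    unfolding rep_def
  proof (rule someI_ex[of "\<lambda>a. a < n \<and> P a \<in> B"])
    obtain a where "P a \<in> B" using assms(3) B by blast
    moreover have "a < n" using through_block_subset_points[OF assms(1) B] \<open>P a \<in> B\<close> assms(2) by blast
    ultimately show "\<exists>a. a < n \<and> P a \<in> B" by blast
  qed
  have "t ! rep B \<in> {1..N}" if "B \<in> through_blocks p" for B
    using rep[OF that] assms(4) unfolding labelings_def by (blast intro: nth_mem)
  then have assignment: "(\<lambda>B. t ! rep B) \<in> assignments N p" by (simp add: assignments_def)
  have "t ! a = t ! rep B" if "B \<in> through_blocks p" "a < n" "P a \<in> B" for B a
    using assms(5) through_block_rel[OF assms(1) that(1) that(3), of "P (rep B)"] rep[OF that(1)] that(2)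
    by (auto simp: valid_row_def)
  then have "t \<in> T_row N p P n (\<lambda>B. t ! rep B)"
    using assms(4,5) by (simp add: T_row_def)
  with assignment show ?thesis by (rule that)
qed

section \<open>The intertwining relations of a partition\<close>

text \<open>The entries \<delta>_p(s, s') of the map T_p associated with p.\<close>
definition compatible :: "partition \<Rightarrow> nat list \<Rightarrow> nat list \<Rightarrow> bool" where
  "compatible p s s' \<longleftrightarrow> valid_up p s \<and> valid_lo p s' \<and> (\<forall>B\<in>through_blocks p. \<forall>a<length (ucols p).
     \<forall>b<length (lcols p). Up a \<in> B \<longrightarrow> Lo b \<in> B \<longrightarrow> s ! a = s' ! b)"

lemma valid_up_in_T:
  assumes "is_partition p" "s \<in> labelings N (length (ucols p))" "valid_up p s"
  obtains g where "g \<in> assignments N p" "s \<in> T N p g"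
  using valid_row_in_T_row[of p Up "length (ucols p)" s N] assms
  by (auto simp: valid_up_eq_valid_row T_eq_T_row points_def through_blocks_def)

lemma valid_lo_in_T':
  assumes "is_partition p" "s \<in> labelings N (length (lcols p))" "valid_lo p s"
  obtains g where "g \<in> assignments N p" "s \<in> T' N p g"
  using valid_row_in_T_row[of p Lo "length (lcols p)" s N] assms
  by (auto simp: valid_lo_eq_valid_row T'_eq_T_row points_def through_blocks_def)

lemma sum_compatible_upper:
  assumes "is_partition p" "s' \<in> T' N p f"
  shows "(\<Sum>t\<in>labelings N (length (ucols p)). if compatible p t s' then F t else 0) = (\<Sum>t\<in>T N p f. F t)"
proof -
  have "{t \<in> labelings N (length (ucols p)). compatible p t s'} = T N p f"
  proof (intro set_eqI iffI)
    fix t assume t: "t \<in> {t \<in> labelings N (length (ucols p)). compatible p t s'}"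
    have "t ! a = f B" if "B \<in> through_blocks p" "a < length (ucols p)" "Up a \<in> B" for B a
      using through_block_has_Lo[OF assms(1) that(1)] t assms(2) that by (auto simp: compatible_def T'_def)
    then show "t \<in> T N p f" using t by (auto simp: T_def compatible_def)
  qed (use assms(2) in \<open>auto simp: T_def T'_def compatible_def\<close>)
  then show ?thesis by (simp add: sum.inter_filter[symmetric])
qed

lemma sum_compatible_lower:
  assumes "is_partition p" "s \<in> T N p g"
  shows "(\<Sum>t\<in>labelings N (length (lcols p)). if compatible p s t then F t else 0) = (\<Sum>t\<in>T' N p g. F t)"
proof -
  have "{t \<in> labelings N (length (lcols p)). compatible p s t} = T' N p g"
  proof (intro set_eqI iffI)
    fix t assume t: "t \<in> {t \<in> labelings N (length (lcols p)). compatible p s t}"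
    have "t ! b = g B" if "B \<in> through_blocks p" "b < length (lcols p)" "Lo b \<in> B" for B b
      using through_block_has_Up[OF assms(1) that(1)] t assms(2) that by (force simp: compatible_def T_def)
    then show "t \<in> T' N p g" using t by (auto simp: T'_def compatible_def)
  qed (use assms(2) in \<open>auto simp: T_def T'_def compatible_def\<close>)
  then show ?thesis by (simp add: sum.inter_filter[symmetric])
qed

lemma R_Gr_intertwines:
  assumes p: "is_partition p" and R_Gr: "R_Gr N p u"
    and s: "s \<in> labelings N (length (ucols p))" and s': "s' \<in> labelings N (length (lcols p))"
  shows "(\<Sum>t\<in>labelings N (length (ucols p)). if compatible p t s' then mono u (ucols p) t s else 0)
       = (\<Sum>t'\<in>labelings N (length (lcols p)). if compatible p s t' then mono u (lcols p) s' t' else 0)"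
proof (cases "valid_up p s"; cases "valid_lo p s'")
  assume "valid_up p s" "valid_lo p s'"
  then obtain g f where "g \<in> assignments N p" "s \<in> T N p g" "f \<in> assignments N p" "s' \<in> T' N p f"
    using valid_up_in_T[OF p s] valid_lo_in_T'[OF p s'] by metis
  then show ?thesis
    using R_Gr by (simp add: sum_compatible_upper[OF p] sum_compatible_lower[OF p] R_Gr_def)
next
  assume "valid_up p s" "\<not> valid_lo p s'"
  then obtain g where "g \<in> assignments N p" "s \<in> T N p g" "s' \<in> T0' N p"
    using valid_up_in_T[OF p s] s' by (metis T0'_def mem_Collect_eq)
  moreover from this have "(\<Sum>t'\<in>T' N p g. mono u (lcols p) s' t') = 0"
    using R_Gr unfolding R_Gr_def by blast
  ultimately show ?thesis
    using \<open>\<not> valid_lo p s'\<close> by (simp add: sum_compatible_lower[OF p] compatible_def[of p _ s'])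
next
  assume "\<not> valid_up p s" "valid_lo p s'"
  then obtain f where "f \<in> assignments N p" "s' \<in> T' N p f" "s \<in> T0 N p"
    using valid_lo_in_T'[OF p s'] s by (metis T0_def mem_Collect_eq)
  moreover from this have "(\<Sum>t\<in>T N p f. mono u (ucols p) t s) = 0"
    using R_Gr unfolding R_Gr_def by blast
  ultimately show ?thesis
    using \<open>\<not> valid_up p s\<close> by (simp add: sum_compatible_upper[OF p] compatible_def[of p s])
next
  assume "\<not> valid_up p s" "\<not> valid_lo p s'"
  then show ?thesis by (simp add: compatible_def)
qed

lemma R_Gr_adjoint:
  assumes p: "is_partition p" and R_Gr: "R_Gr N p u" and "biunitary N u"
    and "s \<in> labelings N (length (ucols p))" "s' \<in> labelings N (length (lcols p))"
  shows "(\<Sum>t'\<in>labelings N (length (lcols p)). if compatible p s t' then mono u (lcols p) t' s' else 0)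
       = (\<Sum>t\<in>labelings N (length (ucols p)). if compatible p t s' then mono u (ucols p) s t else 0)"
proof (rule intertwiner_adjoint[where R = "compatible p"])
  show "(\<Sum>t\<in>labelings N (length (ucols p)). if compatible p t s' then mono u (ucols p) t s else 0)
      = (\<Sum>t'\<in>labelings N (length (lcols p)). if compatible p s t' then mono u (lcols p) s' t' else 0)"
    if "s \<in> labelings N (length (ucols p))" "s' \<in> labelings N (length (lcols p))" for s s'
    using R_Gr_intertwines[OF p R_Gr that] .
qed (use assms(3-5) biunitary_mono_rows[OF assms(3)] biunitary_mono_columns[OF assms(3)] in simp_all)

section \<open>The relations of the partition quantum space\<close>

lemma T_subset_labelings: "T N p f \<subseteq> labelings N (length (ucols p))" "T' N p f \<subseteq> labelings N (length (lcols p))"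
  by (auto simp: T_def T'_def)

lemma finite_T [simp]: "finite (T N p f)" "finite (T' N p f)"
  by (simp_all add: T_def T'_def)

lemma T_nonempty:
  assumes "is_partition p" "f \<in> assignments N p" "N \<ge> 1"
  shows "T N p f \<noteq> {}"
proof -
  have "replicate (length (ucols p)) 1 \<in> labelings N (length (ucols p))"
    using assms(3) by (simp add: labelings_def set_replicate_conv_if)
  then have "relabel p Up f (replicate (length (ucols p)) 1) \<in> T N p f"
    unfolding T_eq_T_row by (rule relabel_in_T_row[OF assms(1,2)]) (simp add: valid_row_def)
  then show ?thesis by blast
qed

lemma sum_T_eq_sum_T':
  assumes p: "is_partition p" and R_Gr: "R_Gr N p u" and "biunitary N u"
    and f: "f \<in> assignments N p" and g: "g \<in> assignments N p"
    and \<gamma>: "\<gamma> \<in> T N p g" and \<gamma>': "\<gamma>' \<in> T' N p g"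
  shows "(\<Sum>t\<in>T N p f. mono u (ucols p) t \<gamma>) = (\<Sum>t'\<in>T' N p f. mono u (lcols p) t' \<gamma>')"
proof -
  let ?M = "mono u (ucols p)" and ?M' = "mono u (lcols p)"
  have "card (T' N p f) \<noteq> 0"
    using card_T_eq(2)[OF p f g] \<gamma>' by (auto simp: card_eq_0_iff)
  then obtain \<sigma>' where \<sigma>': "\<sigma>' \<in> T' N p f" by fastforce
  define Z where "Z = (\<Sum>t'\<in>T' N p g. ?M' \<sigma>' t')"
  have upper: "(\<Sum>t\<in>T N p f. ?M t \<rho>) = Z" if "\<rho> \<in> T N p g" for \<rho>
    using R_Gr_intertwines[OF p R_Gr, of \<rho> \<sigma>'] that \<sigma>' T_subset_labelings
    unfolding sum_compatible_upper[OF p \<sigma>'] sum_compatible_lower[OF p that] Z_def by blast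
  have lower: "(\<Sum>t'\<in>T' N p f. ?M' t' \<gamma>') = (\<Sum>t\<in>T N p g. ?M \<sigma> t)" if "\<sigma> \<in> T N p f" for \<sigma>
    using R_Gr_adjoint[OF p R_Gr \<open>biunitary N u\<close>, of \<sigma> \<gamma>'] that \<gamma>' T_subset_labelings
    unfolding sum_compatible_upper[OF p \<gamma>'] sum_compatible_lower[OF p that] by blast
  have card_pos: "card (T N p f) > 0"
    using card_T_eq(1)[OF p f g] \<gamma> by (auto simp: card_gt_0_iff)
  have "of_nat (card (T N p f)) * (\<Sum>t'\<in>T' N p f. ?M' t' \<gamma>') = (\<Sum>\<sigma>\<in>T N p f. \<Sum>t'\<in>T' N p f. ?M' t' \<gamma>')"
    by simp
  also have "\<dots> = (\<Sum>\<sigma>\<in>T N p f. \<Sum>t\<in>T N p g. ?M \<sigma> t)"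
    using lower by (rule sum.cong[OF refl])
  also have "\<dots> = (\<Sum>t\<in>T N p g. \<Sum>\<sigma>\<in>T N p f. ?M \<sigma> t)"
    by (rule sum.swap)
  also have "\<dots> = (\<Sum>t\<in>T N p g. Z)"
    using upper by (rule sum.cong[OF refl])
  also have "\<dots> = of_nat (card (T N p f)) * Z"
    by (simp add: card_T_eq(1)[OF p f g])
  finally have "(\<Sum>t'\<in>T' N p f. ?M' t' \<gamma>') = Z"
    by (rule of_nat_mult_cancel_left[OF card_pos])
  with upper[OF \<gamma>] show ?thesis by simp
qed

lemma sum_T'_T0'_eq_0:
  assumes p: "is_partition p" and R_Gr: "R_Gr N p u" and "biunitary N u"
    and f: "f \<in> assignments N p" and \<gamma>': "\<gamma>' \<in> T0' N p"
  shows "(\<Sum>t'\<in>T' N p f. mono u (lcols p) t' \<gamma>') = 0"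
proof -
  have invalid: "\<not> valid_lo p \<gamma>'" and \<gamma>'_labeling: "\<gamma>' \<in> labelings N (length (lcols p))"
    using \<gamma>' by (auto simp: T0'_def)
  then have "\<gamma>' \<noteq> []" by (auto simp: valid_lo_def labelings_def)
  then have "N \<ge> 1"
    using \<gamma>'_labeling by (cases \<gamma>') (auto simp: labelings_def)
  then obtain \<sigma> where \<sigma>: "\<sigma> \<in> T N p f" using T_nonempty[OF p f] by blast
  have "(\<Sum>t'\<in>T' N p f. mono u (lcols p) t' \<gamma>')
      = (\<Sum>t\<in>labelings N (length (ucols p)). if compatible p t \<gamma>' then mono u (ucols p) \<sigma> t else 0)"
    using R_Gr_adjoint[OF p R_Gr \<open>biunitary N u\<close>, of \<sigma> \<gamma>'] \<sigma> \<gamma>'_labeling T_subset_labelings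
    unfolding sum_compatible_lower[OF p \<sigma>] by blast
  also have "\<dots> = 0"
    using invalid by (simp add: compatible_def)
  finally show ?thesis .
qed

theorem theorem4p17:
  fixes N d :: nat and \<Pi> :: "partition set" and u :: "nat \<Rightarrow> nat \<Rightarrow> 'a::cstar_algebra"
  assumes "d \<le> N"
    and "\<forall>p \<in> \<Pi>. is_partition p"
    and "mixed_pairs \<subseteq> \<Pi>"
    and "\<forall>p \<in> \<Pi>. R_Gr N p u"
  shows "\<forall>p \<in> \<Pi>. R_Sp N d p u"
proof
  fix p assume "p \<in> \<Pi>"
  then have p: "is_partition p" and R_Gr: "R_Gr N p u"
    using assms(2,4) by auto
  have biunitary: "biunitary N u"
    using assms(3,4) by (intro mixed_pairs_biunitary) auto
  have T0: "(\<Sum>t\<in>T N p f. mono u (ucols p) t \<gamma>) = 0" if "f \<in> assignments N p" "\<gamma> \<in> T0 N p" for f \<gamma>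
    using R_Gr that unfolding R_Gr_def by blast
  show "R_Sp N d p u"
    unfolding R_Sp_def
    using sum_T_eq_sum_T'[OF p R_Gr biunitary] T0 sum_T'_T0'_eq_0[OF p R_Gr biunitary] by blast
qed

end
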